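(* Let $u_1, \ldots, u_n, v_1, \ldots, v_m \in \mathcal{L}_s$. Then $\max(u_1, \ldots, u_n) \leqslant_{\mathcal{L}} \max(v_1, \ldots, v_m)$ if and only if for every $i$ there exists $j$ such that $u_i \leqslant_{\mathcal{L}} v_j$.
   Context: $\mathcal{X}$ is a countable set of variables; a valuation is $\sigma\colon\mathcal{X}\to\mathbb{N}$. For finite $E\subseteq\mathcal{X}$, $x\in\mathcal{X}$, $S\in\mathbb{N}$, the sublevels $A(E,x,S)$ and $B(E,S)$ have values $[A(E,x,S)]_\sigma = 0$ if some $y\in E$ has $\sigma(y)=0$, and $\sigma(x)+S$ otherwise; $[B(E,S)]_\sigma=0$ if some $y\in E$ has $\sigma(y)=0$, and $S$ otherwise. $\mathcal{L}_s$ is the set of sublevels $A(E,x,S)$ with $x\in E$ and $B(E,S)$ with $S>0$. $\max$ of a finite family is evaluated pointwise (empty max has value $0$). $t_1\leqslant_{\mathcal{L}} t_2$ means $[t_1]_\sigma\le[t_2]_\sigma$ for every valuation $\sigma$. *)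

theory Defs
  imports Main "HOL-Library.Countable"
begin

text \<open>Sublevels over a countable set of variables 'v.
  SA E x S stands for A(E,x,S), SB E S for B(E,S).\<close>
datatype 'v sublevel = SA "'v set" 'v nat | SB "'v set" nat

type_synonym 'v valuation = "'v \<Rightarrow> nat"

fun sval :: "'v valuation \<Rightarrow> 'v sublevel \<Rightarrow> nat" where
  "sval \<sigma> (SA E x S) = (if \<exists>y\<in>E. \<sigma> y = 0 then 0 else \<sigma> x + S)"
| "sval \<sigma> (SB E S) = (if \<exists>y\<in>E. \<sigma> y = 0 then 0 else S)"

fun in_Ls :: "'v sublevel \<Rightarrow> bool" where
  "in_Ls (SA E x S) = (finite E \<and> x \<in> E)"
| "in_Ls (SB E S) = (finite E \<and> S > 0)"

definition max_val :: "'v valuation \<Rightarrow> 'v sublevel list \<Rightarrow> nat" where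
  "max_val \<sigma> ts = Max (insert 0 (sval \<sigma> ` set ts))"

text \<open>t1 \<le>_L t2 for terms given by their semantics.\<close>
definition leL :: "('v valuation \<Rightarrow> nat) \<Rightarrow> ('v valuation \<Rightarrow> nat) \<Rightarrow> bool" where
  "leL t1 t2 \<longleftrightarrow> (\<forall>\<sigma>. t1 \<sigma> \<le> t2 \<sigma>)"

end

theory Submission
  imports Defs
begin

text \<open>The direction from right to left holds because the maximum is monotone. Conversely,
  each u in L_s has a test valuation that is 1 on its guard E and 0 elsewhere, except that for
  u = A(E,x,S) the variable x is raised above every constant occurring in the v's. At this
  valuation u is positive, so some v dominates u there; this already forces the guard of v into
  E and, in the A case, the variable of v to be x, and these are exactly the conditions under
  which u is dominated by v everywhere.\<close>

abbreviation sublevel_le :: "'v sublevel \<Rightarrow> 'v sublevel \<Rightarrow> bool" where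
  "sublevel_le u v \<equiv> leL (\<lambda>\<sigma>. sval \<sigma> u) (\<lambda>\<sigma>. sval \<sigma> v)"

fun guard :: "'v sublevel \<Rightarrow> 'v set" where
  "guard (SA E x S) = E"
| "guard (SB E S) = E"

fun const_part :: "'v sublevel \<Rightarrow> nat" where
  "const_part (SA E x S) = S"
| "const_part (SB E S) = S"

lemma guard_subset_if_sval_pos:
  assumes "0 < sval \<sigma> v" "\<And>y. 0 < \<sigma> y \<Longrightarrow> y \<in> E"
  shows "guard v \<subseteq> E"
  using assms by (cases v) (auto split: if_splits)

lemma sublevel_le_SA_SA:
  assumes "F \<subseteq> E" "S \<le> T"
  shows "sublevel_le (SA E x S) (SA F x T)"
  using assms unfolding leL_def by (fastforce dest: subsetD)

lemma sublevel_le_SB_SB: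
  assumes "F \<subseteq> E" "S \<le> T"
  shows "sublevel_le (SB E S) (SB F T)"
  using assms unfolding leL_def by (fastforce dest: subsetD)

lemma sublevel_le_SB_SA:
  assumes "F \<subseteq> E" "y \<in> E" "S \<le> T + 1"
  shows "sublevel_le (SB E S) (SA F y T)"
  unfolding leL_def
proof
  fix \<sigma>
  show "sval \<sigma> (SB E S) \<le> sval \<sigma> (SA F y T)"
  proof (cases "\<exists>z\<in>E. \<sigma> z = 0")
    case False
    then have "1 \<le> \<sigma> y" using \<open>y \<in> E\<close> by (simp add: Suc_le_eq)
    moreover have "\<not> (\<exists>z\<in>F. \<sigma> z = 0)" using False \<open>F \<subseteq> E\<close> by blast
    then have "sval \<sigma> (SA F y T) = \<sigma> y + T" by (simp only: sval.simps if_False)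
    moreover have "sval \<sigma> (SB E S) = S" using False by (simp only: sval.simps if_False)
    ultimately show ?thesis using \<open>S \<le> T + 1\<close> by linarith
  qed simp
qed

text \<open>The value K + 2 at x is chosen so that, once K bounds the constant parts of the
  competitors, a competitor A(F,y,T) with y \<noteq> x stays below the value K + 2 + S of u.\<close>

fun test_val :: "nat \<Rightarrow> 'v sublevel \<Rightarrow> 'v valuation" where
  "test_val K (SA E x S) = (\<lambda>y. of_bool (y \<in> E))(x := K + 2)"
| "test_val K (SB E S) = (\<lambda>y. of_bool (y \<in> E))"

lemma sval_test_val_self_pos:
  assumes "in_Ls u"
  shows "0 < sval (test_val K u) u"
  using assms by (cases u) auto

lemma test_val_pos_imp_mem_guard:
  assumes "in_Ls u" "0 < test_val K u y"
  shows "y \<in> guard u"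
  using assms by (cases u) (auto split: if_splits)

lemma guard_subset_of_test_val:
  assumes "in_Ls u" "sval (test_val K u) u \<le> sval (test_val K u) v"
  shows "guard v \<subseteq> guard u"
proof (rule guard_subset_if_sval_pos)
  show "0 < sval (test_val K u) v"
    using sval_test_val_self_pos[OF assms(1)] assms(2) by (rule less_le_trans)
  show "y \<in> guard u" if "0 < test_val K u y" for y
    using assms(1) that by (rule test_val_pos_imp_mem_guard)
qed

lemma sublevel_le_of_test_val_SA:
  assumes u: "u = SA E x S" "in_Ls u" and v: "const_part v \<le> K"
    and le: "sval (test_val K u) u \<le> sval (test_val K u) v"
  shows "sublevel_le u v"
proof -
  let ?\<sigma> = "test_val K u"
  have x: "x \<in> E" using u by simp
  have self: "sval ?\<sigma> u = K + 2 + S" using u by simp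
  have guard: "guard v \<subseteq> E" using guard_subset_of_test_val[OF u(2) le] u(1) by simp
  show ?thesis
  proof (cases v)
    case (SA F y T)
    have "sval ?\<sigma> v = ?\<sigma> y + T" using guard SA u(1) x by auto
    moreover have "?\<sigma> y \<le> 1" if "y \<noteq> x" using that u(1) by simp
    ultimately have "y = x" "S \<le> T" using le self v SA u(1) by (auto split: if_splits)
    then show ?thesis using sublevel_le_SA_SA guard SA u(1) by simp
  next
    case (SB F T)
    have "sval ?\<sigma> v \<le> T" using SB by simp
    then show ?thesis using le self v SB by simp
  qed
qed

lemma sublevel_le_of_test_val_SB:
  assumes u: "u = SB E S" "in_Ls u" and v: "in_Ls v"
    and le: "sval (test_val K u) u \<le> sval (test_val K u) v"
  shows "sublevel_le u v"
proof -
  let ?\<sigma> = "test_val K u"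
  have self: "sval ?\<sigma> u = S" using u(1) by simp
  have guard: "guard v \<subseteq> E" using guard_subset_of_test_val[OF u(2) le] u(1) by simp
  show ?thesis
  proof (cases v)
    case (SA F y T)
    have "y \<in> E" using guard v(1) SA by auto
    moreover have "sval ?\<sigma> v = T + 1" using guard SA u(1) \<open>y \<in> E\<close> by auto
    ultimately show ?thesis using sublevel_le_SB_SA guard le self SA u(1) by simp
  next
    case (SB F T)
    have "sval ?\<sigma> v = T" using guard SB u(1) by auto
    then show ?thesis using sublevel_le_SB_SB guard le self SB u(1) by simp
  qed
qed

lemma sublevel_le_of_test_val:
  assumes "in_Ls u" "in_Ls v" "const_part v \<le> K"
    and "sval (test_val K u) u \<le> sval (test_val K u) v"
  shows "sublevel_le u v"
proof (cases u)
  case SA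
  from sublevel_le_of_test_val_SA[OF this assms(1,3,4)] show ?thesis .
next
  case SB
  from sublevel_le_of_test_val_SB[OF this assms(1,2,4)] show ?thesis .
qed

lemma sval_le_max_val:
  assumes "v \<in> set vs"
  shows "sval \<sigma> v \<le> max_val \<sigma> vs"
  using assms unfolding max_val_def by (intro Max_ge) auto

lemma max_val_witness:
  assumes "c \<le> max_val \<sigma> vs" "0 < c"
  obtains v where "v \<in> set vs" "c \<le> sval \<sigma> v"
proof -
  have "max_val \<sigma> vs \<in> insert 0 (sval \<sigma> ` set vs)"
    unfolding max_val_def by (intro Max_in) auto
  then show ?thesis using assms that by auto
qed

lemma max_val_mono:
  assumes "\<forall>u\<in>set us. \<exists>v\<in>set vs. sval \<sigma> u \<le> sval \<sigma> v"
  shows "max_val \<sigma> us \<le> max_val \<sigma> vs"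
  unfolding max_val_def[of \<sigma> us]
proof (rule Max.boundedI)
  fix a assume "a \<in> insert 0 (sval \<sigma> ` set us)"
  then show "a \<le> max_val \<sigma> vs"
  proof
    assume "a \<in> sval \<sigma> ` set us"
    then obtain v where "v \<in> set vs" "a \<le> sval \<sigma> v" using assms by blast
    then show ?thesis using sval_le_max_val[of v vs \<sigma>] by linarith
  qed simp
qed simp_all

lemma leL_max_val_imp_sublevel_le:
  assumes le: "leL (\<lambda>\<sigma>. max_val \<sigma> us) (\<lambda>\<sigma>. max_val \<sigma> vs)"
    and u: "u \<in> set us" "in_Ls u" and vs: "\<forall>v\<in>set vs. in_Ls v"
  obtains v where "v \<in> set vs" "sublevel_le u v"
proof -
  define K where "K = Max (insert 0 (const_part ` set vs))"
  let ?\<sigma> = "test_val K u"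
  have "sval ?\<sigma> u \<le> max_val ?\<sigma> us" using u(1) by (rule sval_le_max_val)
  also have "\<dots> \<le> max_val ?\<sigma> vs" using le unfolding leL_def by blast
  finally obtain v where v: "v \<in> set vs" "sval ?\<sigma> u \<le> sval ?\<sigma> v"
    using max_val_witness sval_test_val_self_pos[OF u(2)] by blast
  have "const_part v \<le> K" unfolding K_def using v(1) by (intro Max_ge) auto
  then have "sublevel_le u v" using sublevel_le_of_test_val[OF u(2)] vs v by blast
  with v(1) show ?thesis by (rule that)
qed

lemma leL_max_val_iff:
  assumes us: "\<forall>u\<in>set us. in_Ls u" and vs: "\<forall>v\<in>set vs. in_Ls v"
  shows "leL (\<lambda>\<sigma>. max_val \<sigma> us) (\<lambda>\<sigma>. max_val \<sigma> vs) \<longleftrightarrow>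
         (\<forall>u\<in>set us. \<exists>v\<in>set vs. sublevel_le u v)"
proof
  assume "leL (\<lambda>\<sigma>. max_val \<sigma> us) (\<lambda>\<sigma>. max_val \<sigma> vs)"
  then show "\<forall>u\<in>set us. \<exists>v\<in>set vs. sublevel_le u v"
    using leL_max_val_imp_sublevel_le us vs by blast
next
  assume "\<forall>u\<in>set us. \<exists>v\<in>set vs. sublevel_le u v"
  then show "leL (\<lambda>\<sigma>. max_val \<sigma> us) (\<lambda>\<sigma>. max_val \<sigma> vs)"
    unfolding leL_def by (blast intro: max_val_mono)
qed

theorem theorem37:
  fixes us vs :: "('v::countable) sublevel list"
  assumes "\<forall>u\<in>set us. in_Ls u" and "\<forall>v\<in>set vs. in_Ls v"
  shows "leL (\<lambda>\<sigma>. max_val \<sigma> us) (\<lambda>\<sigma>. max_val \<sigma> vs) \<longleftrightarrow>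
         (\<forall>i<length us. \<exists>j<length vs. leL (\<lambda>\<sigma>. sval \<sigma> (us ! i)) (\<lambda>\<sigma>. sval \<sigma> (vs ! j)))"
  unfolding leL_max_val_iff[OF assms] all_set_conv_all_nth by (fastforce simp: in_set_conv_nth)

end
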